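(* Neither the sequential fan $S_\omega$ nor Arens' space $S_2$ is self-selective.
   Context: For spaces $Y$, $X$, a map $\varphi:Y\to\mathcal P(X)\setminus\{\emptyset\}$ is lower semicontinuous (l.s.c.) if $\{y:\varphi(y)\cap U\neq\emptyset\}$ is open in $Y$ for every open $U\subseteq X$; a selection is a map $f:Y\to X$ with $f(y)\in\varphi(y)$ for all $y$. A space $X$ is self-selective if every l.s.c. map from $X$ to the nonempty closed subsets of $X$ has a continuous selection. The sequential fan $S_\omega$ is the quotient of the topological sum of countably many convergent sequences (with limits) obtained by identifying all limit points. Arens' space $S_2=\{x\}\cup\{x_n:n\in\omega\}\cup\{x_{n,m}:n,m\in\omega\}$: each $x_{n,m}$ is isolated; a neighborhood base at $x_n$ consists of the sets $\{x_n\}\cup\{x_{n,m}:m\in\omega\setminus K\}$, $K$ finite; a neighborhood base at $x$ consists of the sets $\{x\}\cup\{x_n:n\in\omega\setminus K\}\cup\{x_{n,m}:n\in\omega\setminus K,\ m>f(n)\}$ with $K$ finite and $f:\omega\to\omega$. *)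

theory Defs
  imports "HOL-Analysis.Analysis"
begin

definition lsc_map :: "'a topology \<Rightarrow> 'b topology \<Rightarrow> ('a \<Rightarrow> 'b set) \<Rightarrow> bool" where
  "lsc_map Y X \<phi> \<longleftrightarrow>
     (\<forall>y\<in>topspace Y. \<phi> y \<subseteq> topspace X \<and> \<phi> y \<noteq> {}) \<and>
     (\<forall>U. openin X U \<longrightarrow> openin Y {y \<in> topspace Y. \<phi> y \<inter> U \<noteq> {}})"

definition self_selective :: "'a topology \<Rightarrow> bool" where
  "self_selective X \<longleftrightarrow>
     (\<forall>\<phi>. lsc_map X X \<phi> \<and> (\<forall>x\<in>topspace X. closedin X (\<phi> x)) \<longrightarrow>
        (\<exists>f. continuous_map X X f \<and> (\<forall>x\<in>topspace X. f x \<in> \<phi> x)))"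

definition conv_seq :: "real topology" where
  "conv_seq = subtopology euclideanreal (insert 0 {1 / real (Suc m) | m. True})"

definition fan_quot :: "nat \<times> real \<Rightarrow> (nat \<times> real) option" where
  "fan_quot p = (if snd p = 0 then None else Some p)"

definition seq_fan :: "(nat \<times> real) option topology" where
  "seq_fan = topology (\<lambda>U. U \<subseteq> fan_quot ` topspace (sum_topology (\<lambda>n. conv_seq) UNIV) \<and>
      openin (sum_topology (\<lambda>n. conv_seq) UNIV)
        {p \<in> topspace (sum_topology (\<lambda>n. conv_seq) UNIV). fan_quot p \<in> U})"

text \<open>Arens' space: \<open>Apex = x\<close>, \<open>Mid n = x_n\<close>, \<open>Leaf n m = x_{n,m}\<close>.\<close>
datatype arens_pt = Apex | Mid nat | Leaf nat nat

definition arens_nbhd_base :: "arens_pt \<Rightarrow> arens_pt set set" where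
  "arens_nbhd_base p = (case p of
      Leaf n m \<Rightarrow> {{Leaf n m}}
    | Mid n \<Rightarrow> {insert (Mid n) {Leaf n m | m. m \<notin> K} | K. finite K}
    | Apex \<Rightarrow> {insert Apex ({Mid n | n. n \<notin> K} \<union> {Leaf n m | n m. n \<notin> K \<and> m > f n})
                | K f. finite K})"

definition arens_space :: "arens_pt topology" where
  "arens_space = topology (\<lambda>U. \<forall>p\<in>U. \<exists>B\<in>arens_nbhd_base p. B \<subseteq> U)"

end

theory Submission
  imports Defs "HOL-Library.Nat_Bijection"
begin

(*
  Both spaces have an apex a (the point x of S_2, the common limit point of S_omega) and
  isolated points x_{n,m}, grouped into columns m, and x_{0,m} converges to a point p
  (p = x_0 in S_2, p = a in S_omega).  We give an l.s.c. map phi with closed values such that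
  phi(p) = {a} and phi(x_{n,m}) depends only on m.  A continuous selection f would make
  f(x_{0,m}) a sequence in phi(x_{0,m}) converging to f(p) = a, and no such sequence exists.

  In S_2, phi(x_{n,m}) is the whole column m.  A sequence of isolated points converging to x
  eventually avoids each row, hence lies below the graph of some h, i.e. in the set of points
  x_{n,m} with m <= h(n); but that set is closed and misses x.

  In S_omega, phi(x_{n,m}) = {x_{0,e(m)}} u {x_{k,m} : k > e(m)}, where e = fst o prod_decode
  takes every value infinitely often.  For large m a neighbourhood of a contains x_{0,e(m)} if
  e(m) is large and x_{e(m)+1,m} otherwise, so phi is l.s.c. at a.  As f(x_{0,m}) eventually
  avoids each x_{0,N}, there are columns t_N >= N with e(t_N) = N and f(x_{0,t_N}) = x_{k_N,t_N},
  k_N > N.  These points converge to a, yet lie below the graph of h(k) = sum_{N<k} t_N, which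
  again is a closed set missing a.
*)

lemma limitin_compose_filterlim:
  assumes "limitin X f l F" "filterlim g F G"
  shows "limitin X (f \<circ> g) l G"
  using assms by (auto simp: limitin_def intro: eventually_compose_filterlim)

lemma eventually_sequentially_iff_finite:
  "(\<forall>\<^sub>F n in sequentially. P n) \<longleftrightarrow> finite {n. \<not> P n}"
  by (simp flip: cofinite_eq_sequentially add: eventually_cofinite)

lemma eventually_eventually_sequentially_iff:
  "(\<forall>\<^sub>F n in sequentially. P n \<and> (\<forall>\<^sub>F m in sequentially. Q n m)) \<longleftrightarrow>
     (\<exists>K f. finite K \<and> (\<forall>n. n \<notin> K \<longrightarrow> P n \<and> (\<forall>m>f n. Q n m)))"
proof
  let ?K = "{n. \<not> (P n \<and> (\<forall>\<^sub>F m in sequentially. Q n m))}"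
  let ?f = "\<lambda>n. Max {m. \<not> Q n m}"
  assume "\<forall>\<^sub>F n in sequentially. P n \<and> (\<forall>\<^sub>F m in sequentially. Q n m)"
  then have "finite ?K" by (simp only: eventually_sequentially_iff_finite)
  moreover have "P n \<and> (\<forall>m>?f n. Q n m)" if "n \<notin> ?K" for n
  proof -
    from that have "P n" and fin: "finite {m. \<not> Q n m}"
      by (simp_all add: eventually_sequentially_iff_finite)
    moreover have "Q n m" if "m > ?f n" for m
      using Max_ge[OF fin, of m] that by auto
    ultimately show ?thesis by blast
  qed
  ultimately show "\<exists>K f. finite K \<and> (\<forall>n. n \<notin> K \<longrightarrow> P n \<and> (\<forall>m>f n. Q n m))"
    by (intro exI[of _ ?K] exI[of _ ?f]) blast
next
  assume "\<exists>K f. finite K \<and> (\<forall>n. n \<notin> K \<longrightarrow> P n \<and> (\<forall>m>f n. Q n m))"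
  then obtain K f where "finite K" and K: "\<And>n. n \<notin> K \<Longrightarrow> P n \<and> (\<forall>m>f n. Q n m)"
    by blast
  from \<open>finite K\<close> have "\<forall>\<^sub>F n in sequentially. n \<notin> K"
    by (simp add: eventually_sequentially_iff_finite)
  then show "\<forall>\<^sub>F n in sequentially. P n \<and> (\<forall>\<^sub>F m in sequentially. Q n m)"
  proof (rule eventually_mono)
    fix n assume "n \<notin> K"
    with K have "P n" and tail: "\<forall>m>f n. Q n m" by auto
    moreover have "\<forall>\<^sub>F m in sequentially. Q n m"
      using eventually_gt_at_top[of "f n"] by (rule eventually_mono) (use tail in blast)
    ultimately show "P n \<and> (\<forall>\<^sub>F m in sequentially. Q n m)" by blast
  qed
qed

lemma frequently_fst_prod_decode: "\<exists>\<^sub>F m in sequentially. fst (prod_decode m) = n"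
  unfolding frequently_sequentially
proof
  fix N
  show "\<exists>m\<ge>N. fst (prod_decode m) = n"
    by (intro exI[of _ "prod_encode (n, N)"]) (simp add: le_prod_encode_2)
qed

lemma istopology_quotient:
  "istopology (\<lambda>U. U \<subseteq> q ` topspace X \<and> openin X {x \<in> topspace X. q x \<in> U})"
proof -
  have "{x \<in> topspace X. q x \<in> S \<inter> T} = {x \<in> topspace X. q x \<in> S} \<inter> {x \<in> topspace X. q x \<in> T}"
    for S T by blast
  moreover have "{x \<in> topspace X. q x \<in> \<Union>\<K>} = (\<Union>S\<in>\<K>. {x \<in> topspace X. q x \<in> S})" for \<K>
    by blast
  ultimately show ?thesis
    unfolding istopology_def by (auto intro!: openin_Union)
qed

lemma inverse_Suc_separated:
  assumes "k \<noteq> m"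
  shows "1 / (real (Suc m) * real (Suc (Suc m))) \<le> \<bar>1 / real (Suc k) - 1 / real (Suc m)\<bar>"
proof (cases "k < m")
  case True
  have "1 / (real (Suc m) * real (Suc (Suc m))) \<le> 1 / (real (Suc k) * real (Suc m))"
    using True by (intro divide_left_mono mult_right_mono) auto
  also have "\<dots> \<le> (real (Suc m) - real (Suc k)) / (real (Suc k) * real (Suc m))"
    using True by (intro divide_right_mono) auto
  also have "\<dots> = 1 / real (Suc k) - 1 / real (Suc m)"
    by (simp add: field_simps)
  finally show ?thesis by linarith
next
  case False
  then have "1 / real (Suc k) \<le> 1 / real (Suc (Suc m))"
    using assms by (intro divide_left_mono) auto
  moreover have "1 / real (Suc m) - 1 / real (Suc (Suc m)) = 1 / (real (Suc m) * real (Suc (Suc m)))"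
    by (simp add: field_simps)
  ultimately show ?thesis by linarith
qed

section \<open>The sequential fan\<close>

lemma topspace_conv_seq: "topspace conv_seq = insert 0 {1 / real (Suc m) | m. True}"
  by (simp add: conv_seq_def)

lemma conv_seq_isolated:
  "\<exists>e>0. \<forall>y\<in>topspace conv_seq. dist y (1 / real (Suc m)) < e \<longrightarrow> y = 1 / real (Suc m)"
proof (intro exI conjI ballI impI)
  let ?e = "1 / (real (Suc m) * real (Suc (Suc m)))"
  show "?e > 0" by simp
  fix y assume "y \<in> topspace conv_seq" and near: "dist y (1 / real (Suc m)) < ?e"
  then consider "y = 0" | k where "y = 1 / real (Suc k)"
    unfolding topspace_conv_seq by blast
  then show "y = 1 / real (Suc m)"
  proof cases
    case 1
    have "?e \<le> 1 / real (Suc m)"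
      by (intro divide_left_mono) auto
    then show ?thesis using near 1 by (simp add: dist_real_def)
  next
    case (2 k)
    then show ?thesis using near inverse_Suc_separated[of k m]
      by (force simp: dist_real_def)
  qed
qed

lemma conv_seq_near_zero:
  assumes "y \<in> topspace conv_seq" "\<bar>y\<bar> < 1 / real (Suc M)"
  obtains "y = 0" | k where "k \<ge> M" "y = 1 / real (Suc k)"
proof -
  from assms(1) consider "y = 0" | k where "y = 1 / real (Suc k)"
    unfolding topspace_conv_seq by blast
  then show ?thesis
  proof cases
    case (2 k)
    have "M \<le> k"
    proof (rule ccontr)
      assume "\<not> M \<le> k"
      then have "1 / real (Suc M) \<le> 1 / real (Suc k)" by (intro divide_left_mono) auto
      with assms(2) 2 show False by simp
    qed
    with 2 that show ?thesis by blast
  qed (use that in blast)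
qed

lemma openin_conv_seq:
  "openin conv_seq W \<longleftrightarrow>
     W \<subseteq> topspace conv_seq \<and> (0 \<in> W \<longrightarrow> (\<forall>\<^sub>F m in sequentially. 1 / real (Suc m) \<in> W))"
proof (intro iffI conjI impI)
  assume W: "openin conv_seq W"
  then show "W \<subseteq> topspace conv_seq" by (rule openin_subset)
  have "limitin conv_seq (\<lambda>m. 1 / real (Suc m)) 0 sequentially"
    unfolding conv_seq_def limitin_subtopology limitin_canonical_iff
    using LIMSEQ_inverse_real_of_nat by (auto simp: inverse_eq_divide intro!: always_eventually)
  moreover assume "0 \<in> W"
  ultimately show "\<forall>\<^sub>F m in sequentially. 1 / real (Suc m) \<in> W"
    using W by (metis limitinD)
next
  assume W: "W \<subseteq> topspace conv_seq \<and> (0 \<in> W \<longrightarrow> (\<forall>\<^sub>F m in sequentially. 1 / real (Suc m) \<in> W))"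
  have "\<exists>e>0. \<forall>y\<in>topspace conv_seq. dist y x < e \<longrightarrow> y \<in> W" if "x \<in> W" for x
  proof -
    from that W consider "x = 0" | m where "x = 1 / real (Suc m)"
      by (auto simp: topspace_conv_seq)
    then show ?thesis
    proof cases
      case 1
      then obtain M where M: "\<And>m. m \<ge> M \<Longrightarrow> 1 / real (Suc m) \<in> W"
        using W \<open>x \<in> W\<close> by (auto simp: eventually_sequentially)
      have "y \<in> W" if "y \<in> topspace conv_seq" "dist y x < 1 / real (Suc M)" for y
      proof -
        from that(2) 1 have "\<bar>y\<bar> < 1 / real (Suc M)" by (simp add: dist_real_def)
        with that(1) show ?thesis
          by (cases rule: conv_seq_near_zero) (use 1 \<open>x \<in> W\<close> M in auto)
      qed
      then show ?thesis by (intro exI[of _ "1 / real (Suc M)"]) simp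
    next
      case (2 m)
      then show ?thesis using conv_seq_isolated[of m] \<open>x \<in> W\<close> by metis
    qed
  qed
  then show "openin conv_seq W"
    using W by (simp add: conv_seq_def openin_euclidean_subtopology_iff)
qed

definition fan_leaf :: "nat \<Rightarrow> nat \<Rightarrow> (nat \<times> real) option" where
  "fan_leaf n m = Some (n, 1 / real (Suc m))"

lemma fan_leaf_eq_iff [simp]: "fan_leaf n m = fan_leaf n' m' \<longleftrightarrow> n = n' \<and> m = m'"
  by (auto simp: fan_leaf_def)

lemma fan_leaf_neq_None [simp]: "fan_leaf n m \<noteq> None" "None \<noteq> fan_leaf n m"
  by (auto simp: fan_leaf_def)

lemma openin_seq_fan:
  "openin seq_fan U \<longleftrightarrow>
     U \<subseteq> insert None {fan_leaf n m | n m. True} \<and>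
     (None \<in> U \<longrightarrow> (\<forall>n. \<forall>\<^sub>F m in sequentially. fan_leaf n m \<in> U))"
proof -
  let ?X = "sum_topology (\<lambda>n. conv_seq) (UNIV :: nat set)"
  have quot_leaf: "fan_quot (n, 1 / real (Suc m)) = fan_leaf n m" for n m
    by (simp add: fan_quot_def fan_leaf_def)
  have quot_zero: "fan_quot (n, 0) = None" for n
    by (simp add: fan_quot_def)
  have leaf_in: "1 / real (Suc m) \<in> topspace conv_seq" for m
    by (auto simp: topspace_conv_seq)
  have zero_in: "0 \<in> topspace conv_seq"
    by (simp add: topspace_conv_seq)
  have "fan_quot ` topspace ?X = insert None {fan_leaf n m | n m. True}"
  proof (intro subset_antisym subsetI)
    fix p assume "p \<in> fan_quot ` topspace ?X"
    then obtain n x where p: "p = fan_quot (n, x)" and "x \<in> topspace conv_seq" by auto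
    then consider "x = 0" | m where "x = 1 / real (Suc m)"
      unfolding topspace_conv_seq by blast
    then show "p \<in> insert None {fan_leaf n m | n m. True}"
      by cases (simp_all only: p quot_leaf quot_zero, blast+)
  next
    fix p assume "p \<in> insert None {fan_leaf n m | n m. True}"
    then show "p \<in> fan_quot ` topspace ?X"
      using leaf_in zero_in by (force simp flip: quot_leaf quot_zero)
  qed
  moreover have "openin conv_seq {x \<in> topspace conv_seq. fan_quot (n, x) \<in> U} \<longleftrightarrow>
      (None \<in> U \<longrightarrow> (\<forall>\<^sub>F m in sequentially. fan_leaf n m \<in> U))" for n
    using leaf_in zero_in by (simp add: openin_conv_seq quot_leaf quot_zero del: of_nat_Suc)
  then have "openin ?X {p \<in> topspace ?X. fan_quot p \<in> U} \<longleftrightarrow>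
      (None \<in> U \<longrightarrow> (\<forall>n. \<forall>\<^sub>F m in sequentially. fan_leaf n m \<in> U))"
    by (simp add: openin_sum_topology)
  ultimately show ?thesis
    unfolding seq_fan_def topology_inverse'[OF istopology_quotient] by simp
qed

lemma topspace_seq_fan: "topspace seq_fan = insert None {fan_leaf n m | n m. True}"
proof (rule subset_antisym)
  show "topspace seq_fan \<subseteq> insert None {fan_leaf n m | n m. True}"
    using openin_seq_fan openin_topspace by blast
  show "insert None {fan_leaf n m | n m. True} \<subseteq> topspace seq_fan"
    by (rule openin_subset) (auto simp: openin_seq_fan)
qed

lemma limitin_seq_fan_leaf: "limitin seq_fan (fan_leaf n) None sequentially"
  unfolding limitin_def by (auto simp: openin_seq_fan topspace_seq_fan)

lemma not_limitin_seq_fan_below_graph: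
  assumes below: "\<And>i. j i \<le> h (k i)" and F: "\<not> trivial_limit F"
  shows "\<not> limitin seq_fan (\<lambda>i. fan_leaf (k i) (j i)) None F"
proof
  let ?V = "insert None {fan_leaf n m | n m. h n < m}"
  have V: "openin seq_fan ?V"
    unfolding openin_seq_fan
  proof (intro conjI impI allI)
    fix n
    show "\<forall>\<^sub>F m in sequentially. fan_leaf n m \<in> ?V"
      using eventually_gt_at_top[of "h n"] by (rule eventually_mono) auto
  qed blast
  assume "limitin seq_fan (\<lambda>i. fan_leaf (k i) (j i)) None F"
  then have "\<forall>\<^sub>F i in F. fan_leaf (k i) (j i) \<in> ?V"
    using V by (rule limitinD) simp
  moreover have "fan_leaf (k i) (j i) \<notin> ?V" for i
    using below[of i] by auto
  ultimately show False
    using F by (simp add: eventually_False)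
qed

lemma limitin_seq_fan_eventually_neq_leaf:
  assumes "limitin seq_fan s None F"
  shows "\<forall>\<^sub>F i in F. s i \<noteq> fan_leaf n m"
proof -
  have "openin seq_fan (topspace seq_fan - {fan_leaf n m})"
    unfolding openin_seq_fan topspace_seq_fan
  proof (intro conjI impI allI)
    fix n'
    show "\<forall>\<^sub>F m' in sequentially.
        fan_leaf n' m' \<in> insert None {fan_leaf n m | n m. True} - {fan_leaf n m}"
      using eventually_gt_at_top[of m] by (rule eventually_mono) auto
  qed blast
  with assms have "\<forall>\<^sub>F i in F. s i \<in> topspace seq_fan - {fan_leaf n m}"
    by (rule limitinD) (simp add: topspace_seq_fan)
  then show ?thesis
    by (rule eventually_mono) blast
qed

definition fan_column_map :: "(nat \<times> real) option \<Rightarrow> (nat \<times> real) option set" where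
  "fan_column_map p = (case p of
      None \<Rightarrow> {None}
    | Some (_, r) \<Rightarrow>
        let m = nat \<lfloor>1 / r\<rfloor> - 1; e = fst (prod_decode m)
        in insert (fan_leaf 0 e) {fan_leaf k m | k. e < k})"

lemma fan_column_map_None [simp]: "fan_column_map None = {None}"
  by (simp add: fan_column_map_def)

lemma fan_column_map_leaf [simp]:
  "fan_column_map (fan_leaf n m) =
     insert (fan_leaf 0 (fst (prod_decode m))) {fan_leaf k m | k. fst (prod_decode m) < k}"
proof -
  have "nat (1 + int m) - Suc 0 = m" by simp
  then show ?thesis by (simp add: fan_column_map_def fan_leaf_def Let_def)
qed

lemma fan_column_map_eventually_meets:
  assumes U: "openin seq_fan U" "None \<in> U"
  shows "\<forall>\<^sub>F m in sequentially. fan_column_map (fan_leaf n m) \<inter> U \<noteq> {}"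
proof -
  have rows: "\<forall>\<^sub>F m in sequentially. fan_leaf k m \<in> U" for k
    using U by (simp add: openin_seq_fan)
  then obtain G where G: "\<And>m. m \<ge> G \<Longrightarrow> fan_leaf 0 m \<in> U"
    by (auto simp: eventually_sequentially)
  have "\<forall>\<^sub>F m in sequentially. \<forall>k\<in>{..G}. fan_leaf k m \<in> U"
    using rows by (intro eventually_ball_finite) auto
  then show ?thesis
  proof (rule eventually_mono)
    fix m assume low_rows: "\<forall>k\<in>{..G}. fan_leaf k m \<in> U"
    let ?e = "fst (prod_decode m)"
    show "fan_column_map (fan_leaf n m) \<inter> U \<noteq> {}"
    proof (cases "G \<le> ?e")
      case True
      then show ?thesis using G by auto
    next
      case False
      then have "fan_leaf (Suc ?e) m \<in> U" using low_rows by simp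
      then show ?thesis by auto
    qed
  qed
qed

lemma lsc_map_fan_column_map: "lsc_map seq_fan seq_fan fan_column_map"
  unfolding lsc_map_def topspace_seq_fan
proof (intro conjI ballI allI impI)
  fix p assume "p \<in> insert None {fan_leaf n m | n m. True}"
  then show "fan_column_map p \<subseteq> insert None {fan_leaf n m | n m. True}"
    and "fan_column_map p \<noteq> {}"
    by auto
next
  fix U assume U: "openin seq_fan U"
  let ?S = "{p \<in> insert None {fan_leaf n m | n m. True}. fan_column_map p \<inter> U \<noteq> {}}"
  show "openin seq_fan ?S"
    unfolding openin_seq_fan
  proof (intro conjI impI allI)
    fix n assume "None \<in> ?S"
    then have "None \<in> U" by simp
    with U have "\<forall>\<^sub>F m in sequentially. fan_column_map (fan_leaf n m) \<inter> U \<noteq> {}"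
      by (rule fan_column_map_eventually_meets)
    then show "\<forall>\<^sub>F m in sequentially. fan_leaf n m \<in> ?S"
      by (rule eventually_mono) auto
  qed (rule Collect_restrict)
qed

lemma closedin_fan_column_map:
  assumes "p \<in> topspace seq_fan"
  shows "closedin seq_fan (fan_column_map p)"
proof -
  from assms consider "p = None" | n m where "p = fan_leaf n m"
    unfolding topspace_seq_fan by blast
  then have "fan_column_map p \<subseteq> topspace seq_fan"
    by cases (auto simp: topspace_seq_fan)
  moreover have "openin seq_fan (topspace seq_fan - fan_column_map p)"
  proof (cases p)
    case None
    then show ?thesis by (auto simp: openin_seq_fan topspace_seq_fan)
  next
    case (Some q)
    then obtain n0 m0 where p: "p = fan_leaf n0 m0"
      using assms by (auto simp: topspace_seq_fan)
    show ?thesis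
      unfolding openin_seq_fan topspace_seq_fan
    proof (intro conjI impI allI)
      fix n
      show "\<forall>\<^sub>F m in sequentially.
          fan_leaf n m \<in> insert None {fan_leaf n m | n m. True} - fan_column_map p"
        using eventually_gt_at_top[of "m0 + fst (prod_decode m0)"]
        by (rule eventually_mono) (auto simp: p)
    qed blast
  qed
  ultimately show ?thesis by (simp add: closedin_def)
qed

lemma seq_fan_not_self_selective: "\<not> self_selective seq_fan"
proof
  assume "self_selective seq_fan"
  then obtain f where f: "continuous_map seq_fan seq_fan f"
    and sel: "\<And>p. p \<in> topspace seq_fan \<Longrightarrow> f p \<in> fan_column_map p"
    unfolding self_selective_def
    using lsc_map_fan_column_map closedin_fan_column_map by blast
  have "f None = None"
    using sel[of None] by (simp add: topspace_seq_fan)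
  then have lim: "limitin seq_fan (\<lambda>m. f (fan_leaf 0 m)) None sequentially"
    using continuous_map_limit[OF f limitin_seq_fan_leaf[of 0]] by (simp add: o_def)
  have "\<exists>t. N \<le> t \<and> f (fan_leaf 0 t) \<noteq> fan_leaf 0 N \<and> fst (prod_decode t) = N" for N
  proof -
    have "\<forall>\<^sub>F t in sequentially. N \<le> t \<and> f (fan_leaf 0 t) \<noteq> fan_leaf 0 N"
      using eventually_ge_at_top[of N] limitin_seq_fan_eventually_neq_leaf[OF lim]
      by (rule eventually_conj)
    from frequently_ex[OF frequently_eventually_conj[OF frequently_fst_prod_decode this]]
    show ?thesis by blast
  qed
  then obtain t where t_ge: "\<And>N. N \<le> t N" and t_avoid: "\<And>N. f (fan_leaf 0 (t N)) \<noteq> fan_leaf 0 N"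
    and t_row: "\<And>N. fst (prod_decode (t N)) = N"
    by metis
  have "\<exists>k>N. f (fan_leaf 0 (t N)) = fan_leaf k (t N)" for N
    using sel[of "fan_leaf 0 (t N)"] t_row[of N] t_avoid[of N] by (auto simp: topspace_seq_fan)
  then obtain k where k_gt: "\<And>N. N < k N" and k: "\<And>N. f (fan_leaf 0 (t N)) = fan_leaf (k N) (t N)"
    by metis
  have "filterlim t sequentially sequentially"
    using filterlim_at_top_mono[OF filterlim_ident, of t] t_ge by simp
  with lim have "limitin seq_fan (\<lambda>N. fan_leaf (k N) (t N)) None sequentially"
    by (auto dest: limitin_compose_filterlim simp: o_def k)
  moreover have "t N \<le> (\<Sum>i<k N. t i)" for N
    using k_gt[of N] by (intro member_le_sum) auto
  ultimately show False
    using not_limitin_seq_fan_below_graph[of t "\<lambda>n. \<Sum>i<n. t i" k sequentially] by simp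
qed

section \<open>Arens' space\<close>

lemma ex_arens_nbhd_base_Apex_subset_iff:
  "(\<exists>B\<in>arens_nbhd_base Apex. B \<subseteq> U) \<longleftrightarrow>
     Apex \<in> U \<and> (\<forall>\<^sub>F n in sequentially. Mid n \<in> U \<and> (\<forall>\<^sub>F m in sequentially. Leaf n m \<in> U))"
  unfolding eventually_eventually_sequentially_iff
proof
  assume "\<exists>B\<in>arens_nbhd_base Apex. B \<subseteq> U"
  then obtain K f where "finite K"
    and "insert Apex ({Mid n | n. n \<notin> K} \<union> {Leaf n m | n m. n \<notin> K \<and> m > f n}) \<subseteq> U"
    by (auto simp: arens_nbhd_base_def)
  then show "Apex \<in> U \<and> (\<exists>K f. finite K \<and> (\<forall>n. n \<notin> K \<longrightarrow> Mid n \<in> U \<and> (\<forall>m>f n. Leaf n m \<in> U)))"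
    by blast
next
  assume "Apex \<in> U \<and> (\<exists>K f. finite K \<and> (\<forall>n. n \<notin> K \<longrightarrow> Mid n \<in> U \<and> (\<forall>m>f n. Leaf n m \<in> U)))"
  then obtain K f where "Apex \<in> U" "finite K" "\<forall>n. n \<notin> K \<longrightarrow> Mid n \<in> U \<and> (\<forall>m>f n. Leaf n m \<in> U)"
    by blast
  then have "insert Apex ({Mid n | n. n \<notin> K} \<union> {Leaf n m | n m. n \<notin> K \<and> m > f n}) \<subseteq> U"
    by blast
  moreover have "insert Apex ({Mid n | n. n \<notin> K} \<union> {Leaf n m | n m. n \<notin> K \<and> m > f n})
      \<in> arens_nbhd_base Apex"
    using \<open>finite K\<close> by (auto simp: arens_nbhd_base_def)
  ultimately show "\<exists>B\<in>arens_nbhd_base Apex. B \<subseteq> U" by blast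
qed

lemma ex_arens_nbhd_base_Mid_subset_iff:
  "(\<exists>B\<in>arens_nbhd_base (Mid n). B \<subseteq> U) \<longleftrightarrow> Mid n \<in> U \<and> (\<forall>\<^sub>F m in sequentially. Leaf n m \<in> U)"
proof -
  have "(\<exists>B\<in>arens_nbhd_base (Mid n). B \<subseteq> U) \<longleftrightarrow>
      Mid n \<in> U \<and> (\<exists>K. finite K \<and> (\<forall>m. m \<notin> K \<longrightarrow> Leaf n m \<in> U))"
    by (auto simp: arens_nbhd_base_def)
  also have "\<dots> \<longleftrightarrow> Mid n \<in> U \<and> (\<forall>\<^sub>F m in sequentially. Leaf n m \<in> U)"
    unfolding eventually_sequentially_iff_finite
    by (auto elim!: rev_finite_subset)
  finally show ?thesis .
qed

lemma ex_arens_nbhd_base_Leaf_subset_iff: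
  "(\<exists>B\<in>arens_nbhd_base (Leaf n m). B \<subseteq> U) \<longleftrightarrow> Leaf n m \<in> U"
  by (simp add: arens_nbhd_base_def)

lemma openin_arens_space:
  "openin arens_space U \<longleftrightarrow>
     (\<forall>n. Mid n \<in> U \<longrightarrow> (\<forall>\<^sub>F m in sequentially. Leaf n m \<in> U)) \<and>
     (Apex \<in> U \<longrightarrow> (\<forall>\<^sub>F n in sequentially. Mid n \<in> U \<and> (\<forall>\<^sub>F m in sequentially. Leaf n m \<in> U)))"
    (is "_ \<longleftrightarrow> ?open U")
proof -
  have all_pt: "(\<forall>p. R p) \<longleftrightarrow> R Apex \<and> (\<forall>n. R (Mid n)) \<and> (\<forall>n m. R (Leaf n m))" for R
    by (metis arens_pt.exhaust)
  have "(\<forall>p\<in>U. \<exists>B\<in>arens_nbhd_base p. B \<subseteq> U) \<longleftrightarrow> ?open U" for U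
    unfolding Ball_def all_pt
    by (auto simp: ex_arens_nbhd_base_Apex_subset_iff ex_arens_nbhd_base_Mid_subset_iff
        ex_arens_nbhd_base_Leaf_subset_iff)
  moreover have "istopology ?open"
    unfolding istopology_def
  proof (rule conjI; intro allI impI)
    fix S T assume "?open S" "?open T"
    then show "?open (S \<inter> T)"
      by (auto simp: eventually_conj_iff elim: eventually_elim2)
  next
    fix \<K> assume open_\<K>: "\<forall>S\<in>\<K>. ?open S"
    have row_mono: "\<forall>\<^sub>F m in sequentially. Leaf n m \<in> \<Union>\<K>"
      if "S \<in> \<K>" "\<forall>\<^sub>F m in sequentially. Leaf n m \<in> S" for S n
      using that(2) by (rule eventually_mono) (use that(1) in blast)
    show "?open (\<Union>\<K>)"
    proof (intro conjI allI impI)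
      fix n assume "Mid n \<in> \<Union>\<K>"
      then obtain S where "S \<in> \<K>" "Mid n \<in> S" by blast
      then show "\<forall>\<^sub>F m in sequentially. Leaf n m \<in> \<Union>\<K>"
        using open_\<K> row_mono by blast
    next
      assume "Apex \<in> \<Union>\<K>"
      then obtain S where S: "S \<in> \<K>" and "Apex \<in> S" by blast
      then have "\<forall>\<^sub>F n in sequentially. Mid n \<in> S \<and> (\<forall>\<^sub>F m in sequentially. Leaf n m \<in> S)"
        using open_\<K> by blast
      then show "\<forall>\<^sub>F n in sequentially. Mid n \<in> \<Union>\<K> \<and> (\<forall>\<^sub>F m in sequentially. Leaf n m \<in> \<Union>\<K>)"
        by (rule eventually_mono) (use S row_mono in blast)
    qed
  qed
  ultimately show ?thesis
    unfolding arens_space_def by simp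
qed

lemma topspace_arens_space: "topspace arens_space = UNIV"
proof -
  have "openin arens_space UNIV" by (simp add: openin_arens_space)
  then show ?thesis using openin_subset by blast
qed

lemma limitin_arens_space_Leaf: "limitin arens_space (Leaf n) (Mid n) sequentially"
  by (simp add: limitin_def openin_arens_space topspace_arens_space)

lemma not_limitin_arens_space_below_graph:
  assumes below: "\<And>i. j i \<le> h (k i)" and F: "\<not> trivial_limit F"
  shows "\<not> limitin arens_space (\<lambda>i. Leaf (k i) (j i)) Apex F"
proof
  let ?V = "- {Leaf n m | n m. m \<le> h n}"
  have row: "\<forall>\<^sub>F m in sequentially. Leaf n m \<in> ?V" for n
    using eventually_gt_at_top[of "h n"] by (rule eventually_mono) auto
  then have V: "openin arens_space ?V"
    by (simp add: openin_arens_space)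
  assume "limitin arens_space (\<lambda>i. Leaf (k i) (j i)) Apex F"
  then have "\<forall>\<^sub>F i in F. Leaf (k i) (j i) \<in> ?V"
    using V by (rule limitinD) simp
  moreover have "Leaf (k i) (j i) \<notin> ?V" for i
    using below[of i] by auto
  ultimately show False
    using F by (simp add: eventually_False)
qed

lemma not_limitin_arens_space_Leaf_Apex:
  "\<not> limitin arens_space (\<lambda>i. Leaf (k i) (j i)) Apex sequentially"
proof
  assume lim: "limitin arens_space (\<lambda>i. Leaf (k i) (j i)) Apex sequentially"
  have "\<forall>\<^sub>F i in sequentially. k i \<noteq> c" for c
  proof -
    let ?V = "- insert (Mid c) (range (Leaf c))"
    have "openin arens_space ?V"
      unfolding openin_arens_space
    proof (intro conjI allI impI)
      show "\<forall>\<^sub>F n in sequentially. Mid n \<in> ?V \<and> (\<forall>\<^sub>F m in sequentially. Leaf n m \<in> ?V)"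
        using eventually_gt_at_top[of c] by (rule eventually_mono) (auto simp: image_iff)
    qed (auto simp: image_iff)
    with lim have "\<forall>\<^sub>F i in sequentially. Leaf (k i) (j i) \<in> ?V"
      by (rule limitinD) (auto simp: image_iff)
    then show ?thesis
      by (rule eventually_mono) auto
  qed
  then obtain N where N: "\<And>c i. i \<ge> N c \<Longrightarrow> k i \<noteq> c"
    unfolding eventually_sequentially by metis
  have "j i \<le> (\<Sum>i'<N (k i). j i')" for i
  proof -
    have "i < N (k i)"
      using N[of "k i" i] by (meson not_le)
    then show ?thesis
      by (intro member_le_sum) auto
  qed
  then show False
    using not_limitin_arens_space_below_graph[of j "\<lambda>c. \<Sum>i<N c. j i" k sequentially] lim by simp
qed

definition arens_column_map :: "arens_pt \<Rightarrow> arens_pt set" where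
  "arens_column_map p = (case p of Leaf n m \<Rightarrow> range (\<lambda>k. Leaf k m) | _ \<Rightarrow> {Apex})"

lemma lsc_map_arens_column_map: "lsc_map arens_space arens_space arens_column_map"
  unfolding lsc_map_def topspace_arens_space
proof (intro conjI ballI allI impI)
  fix p
  show "arens_column_map p \<subseteq> UNIV" by simp
  show "arens_column_map p \<noteq> {}" by (cases p) (auto simp: arens_column_map_def)
next
  fix U assume U: "openin arens_space U"
  let ?S = "{p \<in> UNIV. arens_column_map p \<inter> U \<noteq> {}}"
  show "openin arens_space ?S"
  proof (cases "Apex \<in> U")
    case True
    then have "\<forall>\<^sub>F n in sequentially. Mid n \<in> U \<and> (\<forall>\<^sub>F m in sequentially. Leaf n m \<in> U)"
      using U by (simp add: openin_arens_space)
    then obtain N where "\<forall>\<^sub>F m in sequentially. Leaf N m \<in> U"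
      unfolding eventually_sequentially by blast
    then have leaves: "\<forall>\<^sub>F m in sequentially. Leaf n m \<in> ?S" for n
      by (rule eventually_mono) (auto simp: arens_column_map_def)
    have "Apex \<in> ?S" "Mid n \<in> ?S" for n
      using True by (simp_all add: arens_column_map_def)
    then show ?thesis
      using leaves by (simp add: openin_arens_space)
  next
    case False
    then have "Apex \<notin> ?S" "Mid n \<notin> ?S" for n
      by (simp_all add: arens_column_map_def)
    then show ?thesis
      by (simp add: openin_arens_space)
  qed
qed

lemma closedin_arens_column_map: "closedin arens_space (arens_column_map p)"
proof -
  have "openin arens_space (- arens_column_map p)"
  proof (cases p)
    case (Leaf n0 m0)
    have row: "\<forall>\<^sub>F m in sequentially. Leaf n m \<in> - arens_column_map p" for n
      using eventually_gt_at_top[of m0] by (rule eventually_mono) (auto simp: Leaf arens_column_map_def)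
    have "Mid n \<in> - arens_column_map p" for n
      by (auto simp: Leaf arens_column_map_def)
    then show ?thesis
      using row by (simp add: openin_arens_space)
  qed (simp_all add: openin_arens_space arens_column_map_def)
  then show ?thesis
    by (simp add: closedin_def topspace_arens_space Compl_eq_Diff_UNIV)
qed

lemma arens_space_not_self_selective: "\<not> self_selective arens_space"
proof
  assume "self_selective arens_space"
  then obtain f where f: "continuous_map arens_space arens_space f"
    and sel: "\<And>p. f p \<in> arens_column_map p"
    unfolding self_selective_def topspace_arens_space
    using lsc_map_arens_column_map closedin_arens_column_map by blast
  have "f (Mid 0) = Apex"
    using sel[of "Mid 0"] by (simp add: arens_column_map_def)
  then have lim: "limitin arens_space (\<lambda>m. f (Leaf 0 m)) Apex sequentially"
    using continuous_map_limit[OF f limitin_arens_space_Leaf[of 0]] by (simp add: o_def)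
  have "\<exists>k. f (Leaf 0 m) = Leaf k m" for m
    using sel[of "Leaf 0 m"] by (auto simp: arens_column_map_def)
  then obtain k where "\<And>m. f (Leaf 0 m) = Leaf (k m) m"
    by metis
  with lim show False
    using not_limitin_arens_space_Leaf_Apex[of k "\<lambda>m. m"] by simp
qed

theorem mainTheorem18:
  shows "\<not> self_selective seq_fan \<and> \<not> self_selective arens_space"
  using seq_fan_not_self_selective arens_space_not_self_selective by blast

end
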